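(* Let $X=(x_0,\ldots,x_6)$ with $x_0<x_1<\cdots<x_6$, and write $d_{i,j}=x_j-x_i$ for $i<j$. There exists a terrain $T$ with points $p_0,\ldots,p_6$ (left to right) having $x$-coordinates $p_i^x=x_i$ for all $i$ and whose visibility graph is $G'$ (with $v_i$ corresponding to $p_i$) if and only if $$d_{0,1}d_{2,3}d_{3,4}d_{5,6}>d_{1,2}d_{4,5}d_{0,3}d_{3,6}.$$
   Context: A terrain is an $x$-monotone polygonal chain with points $p_0,\ldots,p_{n-1}$ listed left to right (strictly increasing $x$-coordinates), consecutive points joined by segments. Points $p_i,p_j$ ($i<j$) see each other iff the open segment $\overline{p_ip_j}$ lies strictly above the terrain, i.e. iff $j=i+1$ or every $p_k$ with $i<k<j$ lies strictly below $\overline{p_ip_j}$. The visibility graph has vertex $v_i$ for $p_i$ and edge $\{v_i,v_j\}$ iff $p_i,p_j$ see each other. $G'$ is the graph on $v_0,\ldots,v_6$ with edge set $\{v_0v_1,v_0v_3,v_0v_4,v_0v_5,v_0v_6,v_1v_2,v_1v_3,v_1v_6,v_2v_3,v_2v_6,v_3v_4,v_3v_5,v_3v_6,v_4v_5,v_5v_6\}$. *)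

theory Defs
  imports Main "HOL.Real"
begin

text \<open>A terrain with n points is given by the x- and y-coordinate functions
  px, py :: nat \<Rightarrow> real on indices 0..n-1, with strictly increasing px.\<close>

definition is_terrain :: "nat \<Rightarrow> (nat \<Rightarrow> real) \<Rightarrow> bool" where
  "is_terrain n px \<longleftrightarrow> (\<forall>i j. i < j \<and> j < n \<longrightarrow> px i < px j)"

definition strictly_below :: "(nat \<Rightarrow> real) \<Rightarrow> (nat \<Rightarrow> real) \<Rightarrow> nat \<Rightarrow> nat \<Rightarrow> nat \<Rightarrow> bool" where
  "strictly_below px py i j k \<longleftrightarrow>
     py k < py i + (py j - py i) * (px k - px i) / (px j - px i)"

definition sees :: "(nat \<Rightarrow> real) \<Rightarrow> (nat \<Rightarrow> real) \<Rightarrow> nat \<Rightarrow> nat \<Rightarrow> bool" where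
  "sees px py i j \<longleftrightarrow> j = i + 1 \<or> (\<forall>k. i < k \<and> k < j \<longrightarrow> strictly_below px py i j k)"

definition vis_edge :: "nat \<Rightarrow> (nat \<Rightarrow> real) \<Rightarrow> (nat \<Rightarrow> real) \<Rightarrow> nat \<Rightarrow> nat \<Rightarrow> bool" where
  "vis_edge n px py a b \<longleftrightarrow> a < n \<and> b < n \<and>
     ((a < b \<and> sees px py a b) \<or> (b < a \<and> sees px py b a))"

definition G'_edges :: "nat set set" where
  "G'_edges = {{0,1},{0,3},{0,4},{0,5},{0,6},{1,2},{1,3},{1,6},{2,3},{2,6},
               {3,4},{3,5},{3,6},{4,5},{5,6}}"

end

theory Submission
  imports Defs
begin

(* Everything is phrased through slopes: p_k lies strictly below the segment p_i p_j
   (i < k < j) iff slope(p_i, p_k) < slope(p_k, p_j), and visibility does not change when an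
   affine function is added to the heights.

   Necessity: shear so that p_3 and p_6 have height 0; the edge 3-6 forces y_4 < 0. The edge
   0-4 bounds y_0 from below by -y_4 (x_3 - x_0)/(x_4 - x_3). The non-edge 4-6 bounds -y_5 by
   -y_4, the non-edges 1-4 and 1-5 (given the edge 1-3) bound y_1 by -y_5, and the non-edge 0-2
   (given y_2 > 0, from the edge 2-6) bounds y_0 by y_1. The resulting upper bound on y_0 can
   exceed the lower one only if the inequality holds.

   Sufficiency: make these bounds tight, i.e. p_4 p_5 p_6, p_1 p_3 p_5 and p_0 p_1 p_2
   collinear, and raise p_2 slightly above the line p_3 p_6; every required visibility and
   invisibility then follows by comparing slopes. *)

definition slope :: "(nat \<Rightarrow> real) \<Rightarrow> (nat \<Rightarrow> real) \<Rightarrow> nat \<Rightarrow> nat \<Rightarrow> real" where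
  "slope px py i j = (py j - py i) / (px j - px i)"

lemma is_terrain_less:
  "is_terrain n px \<Longrightarrow> i < j \<Longrightarrow> j < n \<Longrightarrow> px i < px j"
  by (simp add: is_terrain_def)

lemma strictly_below_iff_cross:
  assumes "px i < px j"
  shows "strictly_below px py i j k \<longleftrightarrow>
           (py k - py i) * (px j - px i) < (py j - py i) * (px k - px i)"
proof -
  have "strictly_below px py i j k \<longleftrightarrow> py k - py i < (py j - py i) * (px k - px i) / (px j - px i)"
    unfolding strictly_below_def by linarith
  also have "\<dots> \<longleftrightarrow> (py k - py i) * (px j - px i) < (py j - py i) * (px k - px i)"
    using assms by (simp add: less_divide_eq)
  finally show ?thesis .
qed

lemma frac_less_frac_iff:
  fixes a b c d :: "'a::linordered_field"
  shows "0 < b \<Longrightarrow> 0 < d \<Longrightarrow> a / b < c / d \<longleftrightarrow> a * d < c * b"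
  by (simp add: field_simps)

context
  fixes n :: nat and px py :: "nat \<Rightarrow> real" and i k j :: nat
  assumes terrain: "is_terrain n px" and order: "i < k" "k < j" "j < n"
begin

private lemma gaps_pos: "0 < px k - px i" "0 < px j - px k" "0 < px j - px i"
  using is_terrain_less[OF terrain, of i k] is_terrain_less[OF terrain, of k j] order by auto

private lemma strictly_below_iff_turn:
  "strictly_below px py i j k \<longleftrightarrow> (py k - py i) * (px j - px k) < (py j - py k) * (px k - px i)"
proof -
  have "(py j - py i) * (px k - px i) - (py k - py i) * (px j - px i)
        = (py j - py k) * (px k - px i) - (py k - py i) * (px j - px k)"
    by (simp add: algebra_simps)
  moreover have "px i < px j" using gaps_pos by simp
  ultimately show ?thesis
    by (simp add: strictly_below_iff_cross) linarith
qed

lemma strictly_below_iff_slope_left: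
  "strictly_below px py i j k \<longleftrightarrow> slope px py i k < slope px py i j"
  using gaps_pos by (simp add: strictly_below_iff_cross slope_def frac_less_frac_iff)

lemma strictly_below_iff_slope_right:
  "strictly_below px py i j k \<longleftrightarrow> slope px py i j < slope px py k j"
proof -
  have "(py j - py i) * (px j - px k) - (py j - py k) * (px j - px i)
        = (py k - py i) * (px j - px k) - (py j - py k) * (px k - px i)"
    by (simp add: algebra_simps)
  then show ?thesis
    using gaps_pos by (simp add: strictly_below_iff_turn slope_def frac_less_frac_iff) linarith
qed

lemma strictly_below_iff_slope:
  "strictly_below px py i j k \<longleftrightarrow> slope px py i k < slope px py k j"
  using gaps_pos by (simp add: strictly_below_iff_turn slope_def frac_less_frac_iff)

lemma slope_eq_if_collinear:
  assumes "slope px py i k = slope px py k j"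
  shows "slope px py i j = slope px py i k"
  using gaps_pos assms by (simp add: slope_def field_simps)

end

lemma sees_imp_strictly_below:
  "sees px py i j \<Longrightarrow> i < k \<Longrightarrow> k < j \<Longrightarrow> strictly_below px py i j k"
  by (auto simp: sees_def)

lemma not_sees_if_not_strictly_below:
  "i < k \<Longrightarrow> k < j \<Longrightarrow> \<not> strictly_below px py i j k \<Longrightarrow> \<not> sees px py i j"
  by (auto simp: sees_def)

lemma not_seesE:
  assumes "\<not> sees px py i j"
  obtains k where "i < k" "k < j" "\<not> strictly_below px py i j k"
  using assms by (auto simp: sees_def)

lemma not_sees_two_apart:
  assumes "\<not> sees px py i j" "i < k" "k < j" "j \<le> i + 2"
  shows "\<not> strictly_below px py i j k"
proof -
  obtain k' where "i < k'" "k' < j" "\<not> strictly_below px py i j k'"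
    using assms(1) by (rule not_seesE)
  moreover have "k' = k" using assms(2-4) \<open>i < k'\<close> \<open>k' < j\<close> by linarith
  ultimately show ?thesis by simp
qed

lemma sees_trans:
  assumes terrain: "is_terrain n px" and order: "i < k" "k < j" "j < n"
    and "sees px py i k" "sees px py k j" "strictly_below px py i j k"
  shows "sees px py i j"
  unfolding sees_def
proof (intro disjI2 allI impI)
  fix m assume m: "i < m \<and> m < j"
  consider "m < k" | "m = k" | "k < m" by linarith
  then show "strictly_below px py i j m"
  proof cases
    case 1
    have "strictly_below px py i k m"
      using 1 m assms by (simp add: sees_imp_strictly_below)
    then have "slope px py i m < slope px py i k"
      using 1 m terrain order by (simp add: strictly_below_iff_slope_left)
    moreover have "slope px py i k < slope px py i j"
      using assms by (simp add: strictly_below_iff_slope_left)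
    ultimately show ?thesis
      using 1 m terrain order by (simp add: strictly_below_iff_slope_left)
  next
    case 2
    then show ?thesis using assms by simp
  next
    case 3
    have "strictly_below px py k j m"
      using 3 m assms by (simp add: sees_imp_strictly_below)
    then have "slope px py k j < slope px py m j"
      using 3 m terrain order by (simp add: strictly_below_iff_slope_right)
    moreover have "slope px py i j < slope px py k j"
      using assms by (simp add: strictly_below_iff_slope_right)
    ultimately show ?thesis
      using 3 m terrain order by (simp add: strictly_below_iff_slope_right)
  qed
qed

lemma strictly_below_add_affine:
  assumes "px i \<noteq> px j"
  shows "strictly_below px (\<lambda>k. py k + a * px k + b) i j k \<longleftrightarrow> strictly_below px py i j k"
proof -
  have "((py j + a * px j + b) - (py i + a * px i + b)) * (px k - px i) / (px j - px i)
        = (py j - py i) * (px k - px i) / (px j - px i) + a * (px k - px i)"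
    using assms by (simp add: field_simps)
  then show ?thesis unfolding strictly_below_def by (simp add: algebra_simps)
qed

lemma sees_add_affine:
  assumes "is_terrain n px" "j < n"
  shows "sees px (\<lambda>k. py k + a * px k + b) i j \<longleftrightarrow> sees px py i j"
proof (cases "i < j")
  case True
  then have "px i \<noteq> px j" using assms is_terrain_less by fastforce
  then show ?thesis unfolding sees_def by (simp add: strictly_below_add_affine)
next
  case False
  then show ?thesis unfolding sees_def by auto
qed

lemma slope_le_if_hidden:
  assumes terrain: "is_terrain n px" and "l < n" and "i < j" and visible: "sees px py i j"
    and hidden: "\<And>m. j < m \<Longrightarrow> m \<le> l \<Longrightarrow> \<not> sees px py i m"
  shows "j < m \<Longrightarrow> m \<le> l \<Longrightarrow> slope px py i m \<le> slope px py i j"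
proof (induction m rule: less_induct)
  case (less m)
  obtain k where k: "i < k" "k < m" "\<not> strictly_below px py i m k"
    using hidden[OF less.prems] by (rule not_seesE)
  have "m < n" using less.prems \<open>l < n\<close> by simp
  with k terrain have "slope px py i m \<le> slope px py i k"
    by (simp add: strictly_below_iff_slope_left)
  also have "\<dots> \<le> slope px py i j"
  proof -
    consider "k < j" | "k = j" | "j < k" by linarith
    then show ?thesis
    proof cases
      case 1
      then have "strictly_below px py i j k"
        using k visible by (simp add: sees_imp_strictly_below)
      then show ?thesis
        using 1 k terrain \<open>m < n\<close> less.prems by (simp add: strictly_below_iff_slope_left)
    next
      case 3
      then show ?thesis using less.IH k less.prems by simp
    qed simp
  qed
  finally show ?case .
qed

(* Consecutive points always see each other, so G' is determined by the pairs at distance >= 2. *)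
definition G'_visibility :: "(nat \<Rightarrow> real) \<Rightarrow> (nat \<Rightarrow> real) \<Rightarrow> bool" where
  "G'_visibility px py \<longleftrightarrow>
     sees px py 0 3 \<and> sees px py 0 4 \<and> sees px py 0 5 \<and> sees px py 0 6 \<and> sees px py 1 3 \<and>
     sees px py 1 6 \<and> sees px py 2 6 \<and> sees px py 3 5 \<and> sees px py 3 6 \<and>
     \<not> sees px py 0 2 \<and> \<not> sees px py 1 4 \<and> \<not> sees px py 1 5 \<and>
     \<not> sees px py 2 4 \<and> \<not> sees px py 2 5 \<and> \<not> sees px py 4 6"

lemma visibility_graph_G'_iff:
  "(\<forall>a b. a \<le> 6 \<and> b \<le> 6 \<longrightarrow> (vis_edge 7 px py a b \<longleftrightarrow> {a, b} \<in> G'_edges)) \<longleftrightarrow>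
   G'_visibility px py" (is "?graph \<longleftrightarrow> _")
proof
  assume ?graph
  then have "vis_edge 7 px py a b \<longleftrightarrow> {a, b} \<in> G'_edges" if "a < b" "b \<le> 6" for a b
    using that by simp
  then show "G'_visibility px py"
    unfolding G'_visibility_def vis_edge_def G'_edges_def by (simp add: doubleton_eq_iff)
next
  assume G': "G'_visibility px py"
  have adjacent: "sees px py 0 1" "sees px py 1 2" "sees px py 2 3" "sees px py 3 4"
    "sees px py 4 5" "sees px py 5 6"
    by (simp_all add: sees_def)
  have "vis_edge 7 px py a b \<longleftrightarrow> {a, b} \<in> G'_edges" if "a \<le> 6" "b \<le> 6" for a b
  proof -
    have "a \<in> {0, 1, 2, 3, 4, 5, 6}" "b \<in> {0, 1, 2, 3, 4, 5, 6}" using that by auto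
    then show ?thesis
      using G' adjacent unfolding G'_visibility_def vis_edge_def G'_edges_def
      by (simp add: doubleton_eq_iff) (elim disjE; simp)
  qed
  then show ?graph by blast
qed

lemma G'_visibility_add_affine:
  assumes "is_terrain 7 px"
  shows "G'_visibility px (\<lambda>k. py k + a * px k + b) \<longleftrightarrow> G'_visibility px py"
  unfolding G'_visibility_def using assms by (simp add: sees_add_affine)

context
  fixes x y :: "nat \<Rightarrow> real"
  assumes terrain: "is_terrain 7 x"
    and below_364: "strictly_below x y 3 6 4"
    and collinear_456: "slope x y 4 5 = slope x y 5 6"
    and collinear_135: "slope x y 1 3 = slope x y 3 5"
    and collinear_012: "slope x y 0 1 = slope x y 1 2"
    and below_132: "strictly_below x y 1 3 2"
    and below_043: "strictly_below x y 0 4 3"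
    and below_263: "strictly_below x y 2 6 3"
begin

private lemmas left = strictly_below_iff_slope_left[OF terrain]
  and right = strictly_below_iff_slope_right[OF terrain]
  and mid = strictly_below_iff_slope[OF terrain]

private lemma below_354: "strictly_below x y 3 5 4"
  and below_365: "strictly_below x y 3 6 5"
proof -
  have s46: "slope x y 4 6 = slope x y 4 5"
    using slope_eq_if_collinear[OF terrain, of 4 5 6] collinear_456 by simp
  have "slope x y 3 4 < slope x y 4 6" using below_364 by (simp add: mid)
  then show "strictly_below x y 3 5 4" using s46 by (simp add: mid)
  have "slope x y 3 6 < slope x y 4 6" using below_364 by (simp add: right)
  then show "strictly_below x y 3 6 5" using s46 collinear_456 by (simp add: right)
qed

private lemma slope_34_35: "slope x y 3 4 < slope x y 3 5"
  using below_354 by (simp add: left)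

private lemma slope_13_23: "slope x y 1 3 < slope x y 2 3"
  using below_132 by (simp add: right)

lemma G'_visible_pairs_if_local_conditions:
  "sees x y 0 3" "sees x y 0 4" "sees x y 0 5" "sees x y 0 6" "sees x y 1 3"
  "sees x y 1 6" "sees x y 2 6" "sees x y 3 5" "sees x y 3 6"
proof -
  have s03_s34: "slope x y 0 3 < slope x y 3 4" using below_043 by (simp add: mid)
  have s34_s36: "slope x y 3 4 < slope x y 3 6" using below_364 by (simp add: left)
  have s12_s13: "slope x y 1 2 < slope x y 1 3" using below_132 by (simp add: left)
  have s35_s36: "slope x y 3 5 < slope x y 3 6" using below_365 by (simp add: left)
  have below_053: "strictly_below x y 0 5 3" using s03_s34 slope_34_35 by (simp add: mid)
  have below_063: "strictly_below x y 0 6 3" using s03_s34 s34_s36 by (simp add: mid)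
  have below_031: "strictly_below x y 0 3 1" using s12_s13 collinear_012 by (simp add: mid)
  have below_163: "strictly_below x y 1 6 3" using s35_s36 collinear_135 by (simp add: mid)
  have adjacent: "sees x y 0 1" "sees x y 1 2" "sees x y 2 3" "sees x y 3 4" "sees x y 4 5"
    "sees x y 5 6"
    by (simp_all add: sees_def)
  note trans = sees_trans[OF terrain]
  show sees_13: "sees x y 1 3" using trans[of 1 2 3] adjacent below_132 by simp
  show sees_03: "sees x y 0 3" using trans[of 0 1 3] adjacent sees_13 below_031 by simp
  show sees_35: "sees x y 3 5" using trans[of 3 4 5] adjacent below_354 by simp
  show sees_36: "sees x y 3 6" using trans[of 3 5 6] adjacent sees_35 below_365 by simp
  show "sees x y 0 4" using trans[of 0 3 4] adjacent sees_03 below_043 by simp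
  show "sees x y 0 5" using trans[of 0 3 5] sees_03 sees_35 below_053 by simp
  show "sees x y 0 6" using trans[of 0 3 6] sees_03 sees_36 below_063 by simp
  show "sees x y 1 6" using trans[of 1 3 6] sees_13 sees_36 below_163 by simp
  show "sees x y 2 6" using trans[of 2 3 6] adjacent sees_36 below_263 by simp
qed

lemma G'_invisible_pairs_if_local_conditions:
  "\<not> sees x y 0 2" "\<not> sees x y 1 4" "\<not> sees x y 1 5" "\<not> sees x y 2 4" "\<not> sees x y 2 5"
  "\<not> sees x y 4 6"
proof -
  note invisible = not_sees_if_not_strictly_below
  show "\<not> sees x y 0 2"
    by (rule invisible[of 0 1]) (use collinear_012 in \<open>simp_all add: mid\<close>)
  show "\<not> sees x y 1 4"
    by (rule invisible[of 1 3]) (use slope_34_35 collinear_135 in \<open>simp_all add: mid\<close>)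
  show "\<not> sees x y 1 5"
    by (rule invisible[of 1 3]) (use collinear_135 in \<open>simp_all add: mid\<close>)
  show "\<not> sees x y 2 4"
    by (rule invisible[of 2 3]) (use slope_13_23 slope_34_35 collinear_135 in \<open>simp_all add: mid\<close>)
  show "\<not> sees x y 2 5"
    by (rule invisible[of 2 3]) (use slope_13_23 collinear_135 in \<open>simp_all add: mid\<close>)
  show "\<not> sees x y 4 6"
    by (rule invisible[of 4 5]) (use collinear_456 in \<open>simp_all add: mid\<close>)
qed

lemma G'_visibility_if_local_conditions: "G'_visibility x y"
  using G'_visible_pairs_if_local_conditions G'_invisible_pairs_if_local_conditions
  unfolding G'_visibility_def by blast

end

(* The inequality of the theorem in the form
   (x_3 - x_0)/(x_4 - x_3) < (x_6 - x_5)/(x_6 - x_4) * (x_3 - x_1)/(x_5 - x_3) * (x_2 - x_0)/(x_2 - x_1),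
   cleared of denominators. *)
definition G'_condition :: "(nat \<Rightarrow> real) \<Rightarrow> bool" where
  "G'_condition x \<longleftrightarrow>
     (x 3 - x 0) * (x 6 - x 4) * (x 5 - x 3) * (x 2 - x 1)
       < (x 6 - x 5) * (x 3 - x 1) * (x 2 - x 0) * (x 4 - x 3)"

lemma G'_condition_iff:
  fixes x :: "nat \<Rightarrow> real"
  shows "G'_condition x \<longleftrightarrow>
         (x 1 - x 0) * (x 3 - x 2) * (x 4 - x 3) * (x 6 - x 5)
           > (x 2 - x 1) * (x 5 - x 4) * (x 3 - x 0) * (x 6 - x 3)"
proof -
  have "(x 6 - x 5) * (x 3 - x 1) * (x 2 - x 0) * (x 4 - x 3)
          - (x 3 - x 0) * (x 6 - x 4) * (x 5 - x 3) * (x 2 - x 1)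
        = (x 1 - x 0) * (x 3 - x 2) * (x 4 - x 3) * (x 6 - x 5)
          - (x 2 - x 1) * (x 5 - x 4) * (x 3 - x 0) * (x 6 - x 3)"
    by (simp add: algebra_simps)
  then show ?thesis unfolding G'_condition_def by linarith
qed

(* p_3 and p_6 at height 0, p_4 p_5 p_6 and p_1 p_3 p_5 and p_0 p_1 p_2 collinear, p_2 at
   height delta (x_2 - x_1); the common factor x_2 - x_1 clears the denominator of y_0. *)
definition G'_witness :: "(nat \<Rightarrow> real) \<Rightarrow> real \<Rightarrow> nat \<Rightarrow> real" where
  "G'_witness x \<delta> k =
     [(x 6 - x 5) * (x 3 - x 1) * (x 2 - x 0) - \<delta> * (x 1 - x 0),
      (x 6 - x 5) * (x 3 - x 1) * (x 2 - x 1),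
      \<delta> * (x 2 - x 1),
      0,
      - ((x 6 - x 4) * (x 5 - x 3) * (x 2 - x 1)),
      - ((x 6 - x 5) * (x 5 - x 3) * (x 2 - x 1)),
      0] ! k"

lemma G'_visibility_G'_witness:
  assumes terrain: "is_terrain 7 x" and "0 < \<delta>" and \<delta>_upper: "\<delta> < (x 6 - x 5) * (x 3 - x 2)"
    and \<delta>_gap: "\<delta> * ((x 1 - x 0) * (x 4 - x 3)) + (x 3 - x 0) * (x 6 - x 4) * (x 5 - x 3) * (x 2 - x 1)
                 < (x 6 - x 5) * (x 3 - x 1) * (x 2 - x 0) * (x 4 - x 3)"
  shows "G'_visibility x (G'_witness x \<delta>)"
proof -
  have x: "x 0 < x 1" "x 1 < x 2" "x 2 < x 3" "x 3 < x 4" "x 4 < x 5" "x 5 < x 6"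
    using is_terrain_less[OF terrain] by simp_all
  define y where "y = G'_witness x \<delta>"
  have y: "y 0 = (x 6 - x 5) * (x 3 - x 1) * (x 2 - x 0) - \<delta> * (x 1 - x 0)"
    "y 1 = (x 6 - x 5) * (x 3 - x 1) * (x 2 - x 1)" "y 2 = \<delta> * (x 2 - x 1)"
    "y 4 = - ((x 6 - x 4) * (x 5 - x 3) * (x 2 - x 1))"
    "y 5 = - ((x 6 - x 5) * (x 5 - x 3) * (x 2 - x 1))"
    and y_zero: "y 3 = 0" "y 6 = 0"
    by (simp_all add: y_def G'_witness_def)
  show ?thesis
    unfolding y_def[symmetric]
  proof (rule G'_visibility_if_local_conditions[OF terrain])
    have "y 4 < 0" using x by (simp add: y mult_pos_pos)
    then show "strictly_below x y 3 6 4"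
      using x by (simp add: strictly_below_iff_cross y_zero mult_neg_pos)
    show "slope x y 4 5 = slope x y 5 6" "slope x y 1 3 = slope x y 3 5"
      "slope x y 0 1 = slope x y 1 2"
      unfolding slope_def y y_zero using x by (simp_all add: field_simps)
    have "\<delta> * ((x 2 - x 1) * (x 3 - x 1)) < (x 6 - x 5) * (x 3 - x 2) * ((x 2 - x 1) * (x 3 - x 1))"
      using \<delta>_upper x by (intro mult_strict_right_mono) simp_all
    then have "y 2 * (x 3 - x 1) < y 1 * (x 3 - x 2)" unfolding y by (simp add: mult_ac)
    then show "strictly_below x y 1 3 2"
      using x by (simp add: strictly_below_iff_cross y_zero algebra_simps)
    have "0 < y 0 * (x 4 - x 3) + y 4 * (x 3 - x 0)"
      using \<delta>_gap unfolding y by (simp add: algebra_simps)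
    then show "strictly_below x y 0 4 3"
      using x by (simp add: strictly_below_iff_cross y_zero algebra_simps)
    have "0 < y 2 * (x 6 - x 3)" using x \<open>0 < \<delta>\<close> by (simp add: y)
    then show "strictly_below x y 2 6 3"
      using x by (simp add: strictly_below_iff_cross y_zero algebra_simps)
  qed
qed

lemma G'_visibility_if_G'_condition:
  assumes terrain: "is_terrain 7 x" and "G'_condition x"
  shows "\<exists>y. G'_visibility x y"
proof -
  have x: "x 0 < x 1" "x 3 < x 4" "x 2 < x 3" "x 5 < x 6"
    using is_terrain_less[OF terrain] by simp_all
  define \<Delta> where "\<Delta> = (x 6 - x 5) * (x 3 - x 1) * (x 2 - x 0) * (x 4 - x 3)
                       - (x 3 - x 0) * (x 6 - x 4) * (x 5 - x 3) * (x 2 - x 1)"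
  have "0 < \<Delta>" using \<open>G'_condition x\<close> by (simp add: G'_condition_def \<Delta>_def)
  moreover have "0 < (x 1 - x 0) * (x 4 - x 3)" "0 < (x 6 - x 5) * (x 3 - x 2)"
    using x by simp_all
  ultimately obtain \<delta> where "0 < \<delta>" "\<delta> < (x 6 - x 5) * (x 3 - x 2)"
    and "\<delta> < \<Delta> / ((x 1 - x 0) * (x 4 - x 3))"
    using field_lbound_gt_zero by (metis divide_pos_pos)
  then have "G'_visibility x (G'_witness x \<delta>)"
    using x by (intro G'_visibility_G'_witness[OF terrain]) (simp_all add: less_divide_eq \<Delta>_def)
  then show ?thesis by blast
qed

lemma G'_condition_if_height_bounds:
  fixes x :: "nat \<Rightarrow> real" and h k s t :: real
  assumes terrain: "is_terrain 7 x" and "0 < h"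
    and bound_0: "h * (x 3 - x 0) < s * (x 4 - x 3)"
    and bound_1: "s * (x 2 - x 1) < t * (x 2 - x 0)"
    and bound_5: "t * (x 5 - x 3) \<le> k * (x 3 - x 1)"
    and bound_4: "k * (x 6 - x 4) \<le> h * (x 6 - x 5)"
  shows "G'_condition x"
proof -
  have x: "x 0 < x 1" "x 1 < x 2" "x 2 < x 3" "x 3 < x 4" "x 4 < x 5" "x 5 < x 6"
    using is_terrain_less[OF terrain] by simp_all
  let ?a = "(x 3 - x 0) / (x 4 - x 3)" and ?b = "(x 2 - x 0) / (x 2 - x 1)"
    and ?c = "(x 3 - x 1) / (x 5 - x 3)" and ?e = "(x 6 - x 5) / (x 6 - x 4)"
  have "h * ?a < s" using bound_0 x by (simp add: field_simps)
  also have "s < t * ?b" using bound_1 x by (simp add: field_simps)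
  also have "t * ?b \<le> k * ?c * ?b"
  proof (rule mult_right_mono)
    show "t \<le> k * ?c" using bound_5 x by (simp add: field_simps)
  qed (use x in simp)
  also have "\<dots> \<le> h * ?e * ?c * ?b"
  proof -
    have "k \<le> h * ?e" using bound_4 x by (simp add: field_simps)
    moreover have "0 \<le> ?c * ?b" using x by simp
    ultimately have "k * (?c * ?b) \<le> h * ?e * (?c * ?b)" by (rule mult_right_mono)
    then show ?thesis by (simp only: mult.assoc)
  qed
  finally have "h * ?a < h * (?e * ?c * ?b)" by (simp only: mult.assoc)
  then have "?a < ?e * ?c * ?b" by (simp only: mult_less_cancel_left_pos[OF \<open>0 < h\<close>])
  also have "?e * ?c * ?b
      = ((x 6 - x 5) * (x 3 - x 1) * (x 2 - x 0)) / ((x 6 - x 4) * (x 5 - x 3) * (x 2 - x 1))"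
    by simp
  finally show ?thesis
    unfolding G'_condition_def using x by (simp add: frac_less_frac_iff mult_ac)
qed

lemma G'_condition_if_normalized:
  fixes x z :: "nat \<Rightarrow> real"
  assumes terrain: "is_terrain 7 x" and z: "z 3 = 0" "z 6 = 0"
    and below_043: "strictly_below x z 0 4 3"
    and below_263: "strictly_below x z 2 6 3"
    and below_364: "strictly_below x z 3 6 4"
    and not_below_021: "\<not> strictly_below x z 0 2 1"
    and not_below_153: "\<not> strictly_below x z 1 5 3"
    and not_below_465: "\<not> strictly_below x z 4 6 5"
  shows "G'_condition x"
proof (rule G'_condition_if_height_bounds[OF terrain, where h = "- z 4" and k = "- z 5"])
  have x: "x 0 < x 1" "x 1 < x 2" "x 2 < x 3" "x 3 < x 4" "x 4 < x 5" "x 5 < x 6"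
    using is_terrain_less[OF terrain] by simp_all
  have "z 4 * (x 6 - x 3) < 0"
    using below_364 x z by (simp add: strictly_below_iff_cross)
  then show "0 < - z 4" using x by (simp add: mult_less_0_iff)
  have "z 2 * (x 6 - x 3) > 0"
    using below_263 x z by (simp add: strictly_below_iff_cross algebra_simps)
  then have "0 < z 2 * (x 1 - x 0)" using x by (simp add: zero_less_mult_iff)
  moreover have "z 0 * (x 2 - x 1) + z 2 * (x 1 - x 0) \<le> z 1 * (x 2 - x 0)"
    using not_below_021 x by (simp add: strictly_below_iff_cross algebra_simps)
  ultimately show "z 0 * (x 2 - x 1) < z 1 * (x 2 - x 0)" by linarith
  show "- z 4 * (x 3 - x 0) < z 0 * (x 4 - x 3)"
    using below_043 x z by (simp add: strictly_below_iff_cross algebra_simps)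
  show "z 1 * (x 5 - x 3) \<le> - z 5 * (x 3 - x 1)"
    using not_below_153 x z by (simp add: strictly_below_iff_cross algebra_simps)
  show "- z 5 * (x 6 - x 4) \<le> - z 4 * (x 6 - x 5)"
    using not_below_465 x z by (simp add: strictly_below_iff_cross algebra_simps)
qed

lemma G'_condition_if_G'_visibility:
  assumes terrain: "is_terrain 7 x" and G': "G'_visibility x y"
  shows "G'_condition x"
proof -
  define a where "a = - slope x y 3 6"
  define z where "z = (\<lambda>k. y k + a * x k + (- a * x 3 - y 3))"
  have z: "z 3 = 0" "z 6 = 0"
    using is_terrain_less[OF terrain, of 3 6] by (simp_all add: z_def a_def slope_def field_simps)
  have "G'_visibility x z"
    unfolding z_def using G' G'_visibility_add_affine[OF terrain] by simp
  then have visible: "sees x z 0 4" "sees x z 2 6" "sees x z 3 6" "sees x z 1 3"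
    and hidden: "\<not> sees x z 0 2" "\<not> sees x z 1 4" "\<not> sees x z 1 5" "\<not> sees x z 4 6"
    unfolding G'_visibility_def by simp_all
  have below: "strictly_below x z 0 4 3" "strictly_below x z 2 6 3" "strictly_below x z 3 6 4"
    using sees_imp_strictly_below[OF visible(1), of 3] sees_imp_strictly_below[OF visible(2), of 3]
      sees_imp_strictly_below[OF visible(3), of 4]
    by simp_all
  have "\<not> strictly_below x z 0 2 1"
    by (rule not_sees_two_apart[OF hidden(1)]) simp_all
  moreover have "\<not> strictly_below x z 1 5 3"
  proof -
    have hidden_from_1: "\<not> sees x z 1 m" if "3 < m" "m \<le> 5" for m
    proof -
      have "m = 4 \<or> m = 5" using that by auto
      then show ?thesis using hidden by auto
    qed
    have "slope x z 1 5 \<le> slope x z 1 3"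
      by (rule slope_le_if_hidden[where l = 5, OF terrain _ _ visible(4) hidden_from_1]) simp_all
    then show ?thesis using terrain by (simp add: strictly_below_iff_slope_left)
  qed
  moreover have "\<not> strictly_below x z 4 6 5"
    by (rule not_sees_two_apart[OF hidden(4)]) simp_all
  ultimately show ?thesis by (rule G'_condition_if_normalized[OF terrain z below])
qed

theorem lemma2:
  fixes x :: "nat \<Rightarrow> real"
  assumes "\<forall>i j. i < j \<and> j \<le> 6 \<longrightarrow> x i < x j"
  shows "(\<exists>py :: nat \<Rightarrow> real. is_terrain 7 x \<and>
            (\<forall>a b. a \<le> 6 \<and> b \<le> 6 \<longrightarrow> (vis_edge 7 x py a b \<longleftrightarrow> {a, b} \<in> G'_edges)))
         \<longleftrightarrow>
         (x 1 - x 0) * (x 3 - x 2) * (x 4 - x 3) * (x 6 - x 5)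
           > (x 2 - x 1) * (x 5 - x 4) * (x 3 - x 0) * (x 6 - x 3)"
proof -
  have terrain: "is_terrain 7 x"
    using assms by (simp add: is_terrain_def)
  then have "(\<exists>py. is_terrain 7 x \<and>
               (\<forall>a b. a \<le> 6 \<and> b \<le> 6 \<longrightarrow> (vis_edge 7 x py a b \<longleftrightarrow> {a, b} \<in> G'_edges)))
             \<longleftrightarrow> (\<exists>y. G'_visibility x y)"
    by (simp add: visibility_graph_G'_iff)
  also have "\<dots> \<longleftrightarrow> G'_condition x"
    using G'_condition_if_G'_visibility G'_visibility_if_G'_condition terrain by blast
  finally show ?thesis by (simp only: G'_condition_iff)
qed

end
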